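(* In the setting where delays are available at action time, run Skipper$(\beta,\mathrm{DEW}(\eta,\beta))$ tuned by the scheme Doubling described in the context. Then for every epoch $m$ that is not the final epoch, $$\mathrm{Bound}_m(\beta_m)\le 3\sqrt{\omega_m}\le 3\,\mathrm{Bound}_m(\beta_m^* )+2e^2K\ln K+1,$$ where $\beta_m^*\in\arg\min_{\beta>0}\mathrm{Bound}_m(\beta)$.
   Context: Setting: fix integers $K\ge 2$, $T\ge 1$, $[K]=\{1,\dots,K\}$. An oblivious adversary fixes in advance losses $\ell_t^a\in[0,1]$ and nonnegative integer delays $d_t$. In each round $t$ the delay $d_t$ is revealed to the learner at the beginning of the round (delay available at action time); the learner then picks (possibly at random) $A_t\in[K]$, suffers $\ell_t^{A_t}$, and at the end of round $t$ observes the pairs $(s,\ell_s^{A_s})$ for all $s\le t$ with $s+d_s=t$. Algorithm DEW with inputs $\eta>0$ and $d_{\max}$: $\eta'=\min\{\eta,(4e\,d_{\max})^{-1}\}$, $w_0^a=1$; in round $t$ play $A_t\sim p_t$ with $p_t^a=w_{t-1}^a/\sum_b w_{t-1}^b$; at the end of the round, for each received pair $(s,\ell_s^{A_s})$ form $\hat\ell_s^a=\ell_s^a\mathbb 1(a=A_s)/p_s^a$ and update $w_t^a=w_{t-1}^a\exp(-\eta'\sum_s\hat\ell_s^a)$ (sum over pairs received in round $t$). Skipper$(\beta,\mathcal A)$ plays the actions of the base algorithm $\mathcal A$ and forwards to $\mathcal A$ only the pairs $(s,\ell_s^{A_s})$ with $d_s<\beta$. Skipper$(\beta,\mathrm{DEW}(\eta,\beta))$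 uses DEW with learning rate $\eta$ and $d_{\max}=\beta$. Doubling: rounds are partitioned into consecutive epochs indexed by $m$, with $\omega_m=2^m$, $\beta_m=\sqrt{\omega_m}/(4e\ln K)$ and $\eta_m=1/(4e\beta_m)$; in each epoch a fresh copy of Skipper$(\beta_m,\mathrm{DEW}(\eta_m,\beta_m))$ is run. For epoch $m$ let $\sigma(m)$ be its number of rounds, $S^m_\beta$ the set of its rounds with $d_t\ge\beta$, and $D^m_\beta$ the sum of $d_t$ over its rounds with $d_t<\beta$. At the beginning of each round $t$, after $d_t$ is revealed, the algorithm stays in the current epoch $m$ if, with round $t$ included in epoch $m$, $$\max\Big\{|S^m_{\beta_m}|^2,\ \Big(\tfrac{eK\sigma(m)}{2}+D^m_{\beta_m}\Big)\ln K\Big\}\le\omega_m;$$ otherwise a new epoch (with a larger index) is started at round $t$, before $A_t$ is selected. For an epoch $m$ define $$\mathrm{Bound}_m(\beta)=|S^m_\beta|+4e\beta\ln K+\frac{\sigma(m)eK/2+D^m_\beta}{4e\beta}.$$ *)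

theory Defs
  imports Complex_Main
begin

text \<open>Delays are given by d :: nat => nat (round t has delay d t, rounds 1..T). Everything below depends only on the delays and K;
  the losses and the learner's randomness play no role.\<close>

definition omega :: "nat \<Rightarrow> real" where
  "omega m = 2 ^ m"

definition beta_ep :: "nat \<Rightarrow> nat \<Rightarrow> real" where
  "beta_ep K m = sqrt (omega m) / (4 * exp 1 * ln (real K))"

definition eta_ep :: "nat \<Rightarrow> nat \<Rightarrow> real" where
  "eta_ep K m = 1 / (4 * exp 1 * beta_ep K m)"

definition S_set :: "(nat \<Rightarrow> nat) \<Rightarrow> nat set \<Rightarrow> real \<Rightarrow> nat set" where
  "S_set d A b = {t \<in> A. b \<le> real (d t)}"

definition D_sum :: "(nat \<Rightarrow> nat) \<Rightarrow> nat set \<Rightarrow> real \<Rightarrow> real" where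
  "D_sum d A b = (\<Sum>t\<in>{t \<in> A. real (d t) < b}. real (d t))"

definition epoch_cond :: "nat \<Rightarrow> (nat \<Rightarrow> nat) \<Rightarrow> nat \<Rightarrow> nat set \<Rightarrow> bool" where
  "epoch_cond K d m A \<longleftrightarrow>
     max ((real (card (S_set d A (beta_ep K m))))^2)
         ((exp 1 * real K * real (card A) / 2 + D_sum d A (beta_ep K m)) * ln (real K))
     \<le> omega m"

definition Bound :: "nat \<Rightarrow> (nat \<Rightarrow> nat) \<Rightarrow> nat set \<Rightarrow> real \<Rightarrow> real" where
  "Bound K d A b = real (card (S_set d A b)) + 4 * exp 1 * b * ln (real K)
     + (real (card A) * exp 1 * real K / 2 + D_sum d A b) / (4 * exp 1 * b)"

text \<open>A run of the doubling scheme over rounds 1..T: n epochs, epoch j consists of the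
  rounds s j, ..., s (Suc j) - 1 and has index idx j (strictly increasing).  Within an
  epoch the condition holds for every prefix (so the algorithm stays); at the first round
  of every later epoch the condition for the previous epoch (with that round included)
  fails (so a new epoch is started).\<close>
definition doubling_run ::
  "nat \<Rightarrow> nat \<Rightarrow> (nat \<Rightarrow> nat) \<Rightarrow> nat \<Rightarrow> (nat \<Rightarrow> nat) \<Rightarrow> (nat \<Rightarrow> nat) \<Rightarrow> bool" where
  "doubling_run K T d n s idx \<longleftrightarrow>
     1 \<le> n \<and> s 0 = 1 \<and> s n = T + 1 \<and>
     (\<forall>j<n. s j < s (Suc j)) \<and>
     (\<forall>j. Suc j < n \<longrightarrow> idx j < idx (Suc j)) \<and>
     (\<forall>j<n. \<forall>t. s j \<le> t \<and> t < s (Suc j) \<longrightarrow> epoch_cond K d (idx j) {s j..t}) \<and>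
     (\<forall>j. Suc j < n \<longrightarrow> \<not> epoch_cond K d (idx j) {s j..s (Suc j)})"

end

theory Submission
  imports Defs
begin

text \<open>Write \<open>u = sqrt \<omega>\<^sub>m\<close>; the tuning is chosen so that \<open>4 e \<beta>\<^sub>m ln K = u\<close>. While the epoch
  condition holds, each of the three terms of \<open>Bound\<^sub>m(\<beta>\<^sub>m)\<close> is at most \<open>u\<close>. For the lower
  bound, the condition fails once the next round is added, and one round raises \<open>|S\<^sub>\<beta>|\<close> by at
  most one and the numerator \<open>\<sigma> e K/2 + D\<^sub>\<beta>\<close> by at most \<open>e K/2 + \<beta>\<close>. For \<open>\<beta> \<ge> \<beta>\<^sub>m\<close> the middle
  term of \<open>Bound\<^sub>m(\<beta>)\<close> is already \<open>\<ge> u\<close>; for \<open>\<beta> < \<beta>\<^sub>m\<close> the rounds with \<open>\<beta> \<le> d\<^sub>t < \<beta>\<^sub>m\<close> move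
  from \<open>D\<close> to \<open>S\<close>, and AM-GM on the last two terms of \<open>Bound\<^sub>m(\<beta>)\<close> yields \<open>Bound\<^sub>m(\<beta>) \<ge> u - 1\<close>
  as soon as \<open>u\<close> dominates \<open>e K ln K\<close>; otherwise \<open>3u\<close> is absorbed by the additive constant.\<close>

definition load :: "nat \<Rightarrow> (nat \<Rightarrow> nat) \<Rightarrow> nat set \<Rightarrow> real \<Rightarrow> real" where
  "load K d A b = real (card A) * exp 1 * real K / 2 + D_sum d A b"

lemma Bound_load:
  "Bound K d A b = real (card (S_set d A b)) + 4 * exp 1 * b * ln (real K)
     + load K d A b / (4 * exp 1 * b)"
  unfolding Bound_def load_def ..

lemma epoch_cond_load:
  "epoch_cond K d m A \<longleftrightarrow>
     (real (card (S_set d A (beta_ep K m))))\<^sup>2 \<le> omega m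
     \<and> load K d A (beta_ep K m) * ln (real K) \<le> omega m"
  unfolding epoch_cond_def load_def by (simp add: mult_ac)

lemma D_sum_nonneg: "0 \<le> D_sum d A b"
  unfolding D_sum_def by (intro sum_nonneg) auto

lemma load_nonneg: "0 \<le> load K d A b"
  unfolding load_def using D_sum_nonneg[of d A b] by simp

lemma card_S_set_insert_le:
  assumes "finite A"
  shows "card (S_set d (insert c A) b) \<le> Suc (card (S_set d A b))"
proof -
  have "S_set d (insert c A) b \<subseteq> insert c (S_set d A b)" unfolding S_set_def by auto
  moreover have "finite (S_set d A b)" using assms unfolding S_set_def by simp
  ultimately have "card (S_set d (insert c A) b) \<le> card (insert c (S_set d A b))"
    by (intro card_mono) auto
  also have "\<dots> \<le> Suc (card (S_set d A b))"
    using \<open>finite (S_set d A b)\<close> by (simp add: card_insert_if)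
  finally show ?thesis .
qed

lemma card_S_set_antimono:
  assumes "finite A" "b \<le> b'"
  shows "card (S_set d A b') \<le> card (S_set d A b)"
  using assms unfolding S_set_def by (intro card_mono) auto

lemma D_sum_insert_le:
  assumes "finite A" "c \<notin> A" "0 \<le> b"
  shows "D_sum d (insert c A) b \<le> D_sum d A b + b"
proof (cases "real (d c) < b")
  case True
  then have "{t \<in> insert c A. real (d t) < b} = insert c {t \<in> A. real (d t) < b}" by auto
  then show ?thesis unfolding D_sum_def using assms True by simp
next
  case False
  then have "{t \<in> insert c A. real (d t) < b} = {t \<in> A. real (d t) < b}" by auto
  then show ?thesis unfolding D_sum_def using assms by simp
qed

lemma load_insert_le:
  assumes "finite A" "c \<notin> A" "0 \<le> b"
  shows "load K d (insert c A) b \<le> load K d A b + exp 1 * real K / 2 + b"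
proof -
  have "real (card (insert c A)) * exp 1 * real K / 2
      = real (card A) * exp 1 * real K / 2 + exp 1 * real K / 2"
    using assms by (simp add: distrib_right add_divide_distrib)
  then show ?thesis using D_sum_insert_le[OF assms, of d] unfolding load_def by linarith
qed

text \<open>Raising the threshold from \<open>b\<close> to \<open>b'\<close> moves the rounds with \<open>b \<le> d\<^sub>t < b'\<close> into \<open>D\<close>.\<close>
lemma D_sum_le_raise_threshold:
  assumes "finite A" "b \<le> b'" "0 \<le> b'"
  shows "D_sum d A b' \<le> D_sum d A b + b' * real (card (S_set d A b))"
proof -
  let ?P = "{t \<in> A. real (d t) < b}" and ?Q = "{t \<in> A. b \<le> real (d t) \<and> real (d t) < b'}"
  have "{t \<in> A. real (d t) < b'} = ?P \<union> ?Q" using assms by auto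
  then have "D_sum d A b' = (\<Sum>t\<in>?P \<union> ?Q. real (d t))"
    unfolding D_sum_def by simp
  also have "\<dots> = D_sum d A b + (\<Sum>t\<in>?Q. real (d t))"
    unfolding D_sum_def by (rule sum.union_disjoint) (use assms in auto)
  also have "(\<Sum>t\<in>?Q. real (d t)) \<le> b' * real (card ?Q)"
    using sum_mono[of ?Q "\<lambda>t. real (d t)" "\<lambda>_. b'"] by (simp add: mult.commute)
  also have "card ?Q \<le> card (S_set d A b)"
    using assms unfolding S_set_def by (intro card_mono) auto
  finally show ?thesis using assms by (simp add: mult_left_mono)
qed

lemma load_le_raise_threshold:
  assumes "finite A" "b \<le> b'" "0 \<le> b'"
  shows "load K d A b' \<le> load K d A b + b' * real (card (S_set d A b))"
  using D_sum_le_raise_threshold[OF assms, of d] unfolding load_def by simp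

lemma real_K_ln_ge_one:
  assumes "2 \<le> K"
  shows "1 \<le> real K * ln (real K)"
proof -
  have "ln (1/2::real) \<le> 1/2 - 1" by (rule ln_le_minus_one) simp
  then have "1/2 \<le> ln (2::real)" by (simp add: ln_div)
  also have "\<dots> \<le> ln (real K)" using assms by simp
  finally have "2 * (1/2) \<le> real K * ln (real K)"
    using assms by (intro mult_mono) auto
  then show ?thesis by simp
qed

lemma beta_ep_pos: "2 \<le> K \<Longrightarrow> 0 < beta_ep K m"
  unfolding beta_ep_def omega_def by simp

lemma beta_ep_scale:
  assumes "2 \<le> K"
  shows "4 * exp 1 * beta_ep K m * ln (real K) = sqrt (omega m)"
  using assms unfolding beta_ep_def by simp

lemma Bound_ge_card_S_set_add:
  assumes "1 \<le> K" "0 < b"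
  shows "real (card (S_set d A b)) + 4 * exp 1 * b * ln (real K) \<le> Bound K d A b"
  unfolding Bound_load using assms load_nonneg[of K d A b] by simp

lemma Bound_ge_card_S_set_sqrt_load:
  assumes "1 \<le> K" "0 < b"
  shows "real (card (S_set d A b)) + 2 * sqrt (load K d A b * ln (real K)) \<le> Bound K d A b"
proof -
  define x where "x = 4 * exp 1 * b * ln (real K)"
  define y where "y = load K d A b / (4 * exp 1 * b)"
  have "load K d A b * ln (real K) = x * y"
    unfolding x_def y_def using assms by (simp add: field_simps)
  moreover have "sqrt (x * y) \<le> (x + y) / 2"
    using assms load_nonneg[of K d A b] unfolding x_def y_def by (intro arith_geo_mean_sqrt) auto
  ultimately have "sqrt (load K d A b * ln (real K)) \<le> (x + y) / 2" by simp
  moreover have "Bound K d A b = real (card (S_set d A b)) + x + y"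
    unfolding Bound_load x_def y_def ..
  ultimately show ?thesis by simp
qed

lemma Bound_nonneg:
  assumes "1 \<le> K" "0 < b"
  shows "0 \<le> Bound K d A b"
proof -
  have "0 \<le> 4 * exp 1 * b * ln (real K)" using assms by simp
  then show ?thesis using Bound_ge_card_S_set_add[OF assms, of d A] by linarith
qed

lemma Bound_beta_ep_le:
  assumes "2 \<le> K" "epoch_cond K d m A"
  shows "Bound K d A (beta_ep K m) \<le> 3 * sqrt (omega m)"
proof -
  define u where "u = sqrt (omega m)"
  have u: "0 < u" "u * u = omega m" unfolding u_def omega_def by auto
  have L: "0 < ln (real K)" using assms by simp
  have "real (card (S_set d A (beta_ep K m))) \<le> u"
    using assms(2) unfolding epoch_cond_load u_def by (simp add: real_le_rsqrt)
  moreover have "load K d A (beta_ep K m) / (4 * exp 1 * beta_ep K m)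
      = load K d A (beta_ep K m) * ln (real K) / u"
    using beta_ep_pos[OF assms(1), of m] L
    unfolding u_def beta_ep_scale[OF assms(1), symmetric] by (simp add: field_simps)
  moreover have "\<dots> \<le> omega m / u"
    using assms(2) u unfolding epoch_cond_load by (simp add: divide_right_mono)
  moreover have "omega m / u = u" using u by (simp add: field_simps)
  ultimately show ?thesis
    unfolding Bound_load beta_ep_scale[OF assms(1)] u_def[symmetric] using u by simp
qed

lemma not_epoch_cond_insert:
  assumes K: "2 \<le> K" and A: "finite A" "c \<notin> A"
    and fail: "\<not> epoch_cond K d m (insert c A)"
    and b: "0 < b" "b \<le> beta_ep K m"
  shows "sqrt (omega m) < real (card (S_set d A b)) + 1
    \<or> omega m < (load K d A b + exp 1 * real K / 2
                   + beta_ep K m * (real (card (S_set d A b)) + 1)) * ln (real K)"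
proof -
  let ?\<beta> = "beta_ep K m" and ?Sb = "real (card (S_set d A b))"
  have S: "real (card (S_set d (insert c A) ?\<beta>)) \<le> ?Sb + 1"
    using card_S_set_insert_le[OF A(1), of d c ?\<beta>] card_S_set_antimono[OF A(1) b(2), of d]
    by simp
  have "load K d (insert c A) ?\<beta> \<le> load K d A b + exp 1 * real K / 2 + ?\<beta> * (?Sb + 1)"
    using load_insert_le[OF A, of ?\<beta> K d] load_le_raise_threshold[OF A(1) b(2), of K d] b
    by (simp add: algebra_simps)
  then have l: "load K d (insert c A) ?\<beta> * ln (real K)
      \<le> (load K d A b + exp 1 * real K / 2 + ?\<beta> * (?Sb + 1)) * ln (real K)"
    using K by (simp add: mult_right_mono)
  from fail consider "sqrt (omega m) < real (card (S_set d (insert c A) ?\<beta>))"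
    | "omega m < load K d (insert c A) ?\<beta> * ln (real K)"
    unfolding epoch_cond_load by (auto simp: not_le real_less_lsqrt)
  then show ?thesis using S l by cases linarith+
qed

lemma Bound_ge_sqrt_omega_minus_one_below:
  assumes K: "2 \<le> K" and A: "finite A" "c \<notin> A"
    and fail: "\<not> epoch_cond K d m (insert c A)"
    and large: "exp 1 * real K * ln (real K) \<le> sqrt (omega m)"
    and b: "0 < b" "b < beta_ep K m"
  shows "sqrt (omega m) - 1 \<le> Bound K d A b"
proof -
  define u where "u = sqrt (omega m)"
  define L where "L = ln (real K)"
  define Sb where "Sb = real (card (S_set d A b))"
  define lb where "lb = load K d A b"
  have u: "0 \<le> u" "u * u = omega m" unfolding u_def omega_def by auto
  have L: "0 < L" unfolding L_def using K by simp
  have e: "2 \<le> exp (1::real)" using exp_ge_add_one_self[of 1] by simp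
  have \<beta>L: "beta_ep K m * L = u / (4 * exp 1)"
    using beta_ep_scale[OF K, of m] unfolding L_def u_def by (simp add: field_simps)
  have "1 \<le> exp 1 * real K * ln (real K)"
    using real_K_ln_ge_one[OF K] e mult_mono[of 1 "exp 1" 1 "real K * ln (real K)"]
    by (simp add: mult.assoc)
  with large have u1: "1 \<le> u" unfolding u_def by linarith
  have "0 \<le> 4 * exp 1 * b * L" using b L by simp
  then have Sb_le: "Sb \<le> Bound K d A b"
    using Bound_ge_card_S_set_add[of K b d A] K b unfolding Sb_def L_def by linarith
  consider "u < Sb + 1" | "u \<le> Sb"
    | "Sb < u" "u * u < (lb + exp 1 * real K / 2 + beta_ep K m * (Sb + 1)) * L"
    using not_epoch_cond_insert[OF K A fail b(1) less_imp_le[OF b(2)]] u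
    unfolding u_def Sb_def lb_def L_def by fastforce
  then show ?thesis
  proof cases
    case 3
    have "beta_ep K m * L * (Sb + 1) \<le> u * u / 4"
    proof -
      have "u * (Sb + 1) \<le> u * (2 * u)" using 3 u u1 by (intro mult_left_mono) auto
      also have "\<dots> \<le> exp 1 * u * u"
        using mult_right_mono[OF e, of "u * u"] by (simp add: mult_ac)
      finally show ?thesis unfolding \<beta>L by (simp add: field_simps)
    qed
    moreover have "exp 1 * real K * L \<le> u * u"
      using large u1 mult_mono[of _ u 1 u] unfolding u_def L_def by simp
    moreover have "(lb + exp 1 * real K / 2 + beta_ep K m * (Sb + 1)) * L
        = lb * L + exp 1 * real K * L / 2 + beta_ep K m * L * (Sb + 1)"
      by (simp add: algebra_simps)
    ultimately have "u * u \<le> 4 * (lb * L)" using 3 by linarith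
    moreover have "(u - Sb) * (u - Sb) \<le> u * u"
      using 3 u unfolding Sb_def by (intro mult_mono) auto
    moreover have lbL: "0 \<le> lb * L"
      using load_nonneg[of K d A b] L unfolding lb_def by (intro mult_nonneg_nonneg) auto
    ultimately have "(u - Sb)\<^sup>2 \<le> (2 * sqrt (lb * L))\<^sup>2"
      by (simp add: power2_eq_square)
    then have "u - Sb \<le> 2 * sqrt (lb * L)"
      by (rule power2_le_imp_le) (simp add: lbL)
    then show ?thesis
      using Bound_ge_card_S_set_sqrt_load[of K b d A] K b unfolding Sb_def lb_def L_def u_def
      by simp
  qed (use Sb_le in \<open>simp_all add: u_def\<close>)
qed

lemma Bound_ge_sqrt_omega_minus_one:
  assumes K: "2 \<le> K" and A: "finite A" "c \<notin> A"
    and fail: "\<not> epoch_cond K d m (insert c A)"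
    and large: "exp 1 * real K * ln (real K) \<le> sqrt (omega m)"
    and b: "0 < b"
  shows "sqrt (omega m) - 1 \<le> Bound K d A b"
proof (cases "b < beta_ep K m")
  case True
  then show ?thesis using Bound_ge_sqrt_omega_minus_one_below[OF assms] by simp
next
  case False
  have "sqrt (omega m) \<le> 4 * exp 1 * b * ln (real K)"
    unfolding beta_ep_scale[OF K, of m, symmetric] using False K by simp
  then show ?thesis using Bound_ge_card_S_set_add[of K b d A] K b by linarith
qed

lemma three_sqrt_omega_le_Bound:
  assumes K: "2 \<le> K" and A: "finite A" "c \<notin> A"
    and fail: "\<not> epoch_cond K d m (insert c A)"
    and b: "0 < b"
  shows "3 * sqrt (omega m) \<le> 3 * Bound K d A b + 2 * (exp 1)\<^sup>2 * real K * ln (real K) + 1"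
proof -
  define Y where "Y = exp 1 * real K * ln (real K)"
  have e: "2 \<le> exp (1::real)" using exp_ge_add_one_self[of 1] by simp
  have Y1: "2 \<le> Y"
    using mult_mono[OF e real_K_ln_ge_one[OF K]] unfolding Y_def by (simp add: mult.assoc)
  have "3 * Y \<le> 2 * exp 1 * Y" using e Y1 by (intro mult_right_mono) auto
  moreover have "2 * exp 1 * Y = 2 * (exp 1)\<^sup>2 * real K * ln (real K)"
    unfolding Y_def by (simp add: power2_eq_square mult_ac)
  moreover have "0 \<le> Bound K d A b" using Bound_nonneg[of K b d A] K b by simp
  moreover have "Y \<le> sqrt (omega m) \<Longrightarrow> sqrt (omega m) - 1 \<le> Bound K d A b"
    using Bound_ge_sqrt_omega_minus_one[OF assms(1-4) _ b] unfolding Y_def .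
  ultimately show ?thesis using Y1 by (cases "Y \<le> sqrt (omega m)") linarith+
qed

lemma doubling_run_epoch_cond:
  assumes "doubling_run K T d n s idx" "Suc j < n"
  shows "epoch_cond K d (idx j) {s j..<s (Suc j)}"
    and "\<not> epoch_cond K d (idx j) (insert (s (Suc j)) {s j..<s (Suc j)})"
proof -
  have run: "(\<forall>j<n. s j < s (Suc j))
      \<and> (\<forall>j<n. \<forall>t. s j \<le> t \<and> t < s (Suc j) \<longrightarrow> epoch_cond K d (idx j) {s j..t})
      \<and> (\<forall>j. Suc j < n \<longrightarrow> \<not> epoch_cond K d (idx j) {s j..s (Suc j)})"
    using assms(1) unfolding doubling_run_def by blast
  have "j < n" using assms(2) by simp
  then have lt: "s j < s (Suc j)"
    and stay: "\<And>t. s j \<le> t \<Longrightarrow> t < s (Suc j) \<Longrightarrow> epoch_cond K d (idx j) {s j..t}"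
    using run by blast+
  have leave: "\<not> epoch_cond K d (idx j) {s j..s (Suc j)}" using run assms(2) by blast
  have "{s j..s (Suc j) - 1} = {s j..<s (Suc j)}" using lt by auto
  then show "epoch_cond K d (idx j) {s j..<s (Suc j)}"
    using stay[of "s (Suc j) - 1"] lt by simp
  have "{s j..s (Suc j)} = insert (s (Suc j)) {s j..<s (Suc j)}" using lt by auto
  then show "\<not> epoch_cond K d (idx j) (insert (s (Suc j)) {s j..<s (Suc j)})"
    using leave by simp
qed

theorem lemma5:
  fixes K T n j :: nat and d s idx :: "nat \<Rightarrow> nat" and beta_star :: real
  assumes "2 \<le> K" and "1 \<le> T"
    and "doubling_run K T d n s idx"
    and "Suc j < n"
    and "0 < beta_star"
    and "\<forall>b>0. Bound K d {s j..<s (Suc j)} beta_star \<le> Bound K d {s j..<s (Suc j)} b"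
  shows "Bound K d {s j..<s (Suc j)} (beta_ep K (idx j)) \<le> 3 * sqrt (omega (idx j))
       \<and> 3 * sqrt (omega (idx j))
           \<le> 3 * Bound K d {s j..<s (Suc j)} beta_star + 2 * (exp 1)^2 * real K * ln (real K) + 1"
proof
  show "Bound K d {s j..<s (Suc j)} (beta_ep K (idx j)) \<le> 3 * sqrt (omega (idx j))"
    using Bound_beta_ep_le[OF assms(1) doubling_run_epoch_cond(1)[OF assms(3,4)]] .
  show "3 * sqrt (omega (idx j))
      \<le> 3 * Bound K d {s j..<s (Suc j)} beta_star + 2 * (exp 1)^2 * real K * ln (real K) + 1"
    by (rule three_sqrt_omega_le_Bound[OF assms(1) finite_atLeastLessThan _
          doubling_run_epoch_cond(2)[OF assms(3,4)] assms(5)]) simp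
qed

end
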